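(* Let $G=(V,E)$ be an undirected graph (finite or infinite) and let $\widehat A,\widehat B$ be two color classes of $G$. Then $\widehat A=\widehat B$ if and only if $\widetilde A=\widetilde B$.
   Context: A graph $G=(V,E)$ has vertex set $V$ and edge set $E\subseteq V^2$; it is undirected if $E$ is irreflexive and symmetric. Implication classes: on $E$ define $(a,b)\Gamma(a',b')$ iff either $a=a'$ and $(b,b')\notin E$, or $b=b'$ and $(a,a')\notin E$; the classes of the transitive closure $\Gamma^*$ are the implication classes. For an implication class $A$, $A^{-1}=\{(b,a):(a,b)\in A\}$ and the color class is $\widehat A=A\cup A^{-1}$. $\widetilde A$ denotes the set of vertices $a$ such that $(a,b)\in A$ or $(b,a)\in A$ for some $b$ (the vertex set spanned by $\widehat A$). *)

theory Defs
  imports Main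
begin

definition undirected_graph :: "'v set \<Rightarrow> ('v \<times> 'v) set \<Rightarrow> bool" where
  "undirected_graph V E \<longleftrightarrow> E \<subseteq> V \<times> V \<and> irrefl E \<and> sym E"

definition Gamma :: "('v \<times> 'v) set \<Rightarrow> (('v \<times> 'v) \<times> ('v \<times> 'v)) set" where
  "Gamma E = {((a,b),(a',b')). (a,b) \<in> E \<and> (a',b') \<in> E \<and>
      ((a = a' \<and> (b,b') \<notin> E) \<or> (b = b' \<and> (a,a') \<notin> E))}"

definition implication_classes :: "('v \<times> 'v) set \<Rightarrow> ('v \<times> 'v) set set" where
  "implication_classes E = E // ((Gamma E)\<^sup>+)"

definition color_class :: "('v \<times> 'v) set \<Rightarrow> ('v \<times> 'v) set" where
  "color_class A = A \<union> A\<inverse>"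

definition span_vertices :: "('v \<times> 'v) set \<Rightarrow> 'v set" where
  "span_vertices A = {a. \<exists>b. (a,b) \<in> A \<or> (b,a) \<in> A}"

end

theory Submission
  imports Defs
begin

text \<open>
  The transitive closure of Gamma is an equivalence relation on the edges that commutes with
  reversing edges, so the converse of an implication class is again one and two color classes
  are either equal or disjoint.

  The key fact is a triangle lemma: if (x,y) lies in an implication class C and v is a common
  neighbour of x and y with (x,v) and (v,y) not in C, then along every Gamma-path from (x,y) the
  edge (s,t) reached keeps v as a common neighbour, with (s,v) in the class of (x,v) and (v,t)
  in the class of (v,y). As (v,v) is no edge, no edge of C touches v.

  Now let the color classes of A and B be disjoint. An edge (a,b) of A and an edge (a,c) of B or
  of its converse span a triangle, since otherwise (a,b) Gamma (a,c). If (c,b) is not in A, the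
  triangle lemma for A with apex c shows that c is spanned by B but not by A; if (c,b) is in A,
  the triangle lemma for the class of (a,c) with apex b shows that b is spanned by A but not by B.
\<close>


lemma Gamma_subset: "Gamma E \<subseteq> E \<times> E"
  by (auto simp: Gamma_def)

lemma trancl_Gamma_subset: "(Gamma E)\<^sup>+ \<subseteq> E \<times> E"
  by (rule trancl_subset_Sigma[OF Gamma_subset])

lemma Gamma_refl: "irrefl E \<Longrightarrow> p \<in> E \<Longrightarrow> (p, p) \<in> Gamma E"
  by (auto simp: Gamma_def irrefl_def)

lemma sym_Gamma: "sym E \<Longrightarrow> sym (Gamma E)"
  by (auto simp: Gamma_def sym_def)

lemma Gamma_swap: "sym E \<Longrightarrow> (p, q) \<in> Gamma E \<Longrightarrow> (prod.swap p, prod.swap q) \<in> Gamma E"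
  by (cases p; cases q) (auto simp: Gamma_def dest: symD)

lemma trancl_Gamma_swap:
  assumes "sym E" and "(p, q) \<in> (Gamma E)\<^sup>+"
  shows "(prod.swap p, prod.swap q) \<in> (Gamma E)\<^sup>+"
  using assms(2)
  by (induction rule: trancl_induct) (auto dest: Gamma_swap[OF assms(1)] intro: trancl_into_trancl)

lemma equiv_trancl_Gamma: "irrefl E \<Longrightarrow> sym E \<Longrightarrow> equiv E ((Gamma E)\<^sup>+)"
  by (intro equivI trancl_Gamma_subset refl_onI sym_trancl sym_Gamma trans_trancl)
    (auto intro: Gamma_refl)

lemma converse_implication_class:
  assumes "irrefl E" "sym E" "A \<in> implication_classes E"
  shows "A\<inverse> \<in> implication_classes E"
proof -
  obtain p where "p \<in> E" and A: "A = (Gamma E)\<^sup>+ `` {p}"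
    using assms(3) unfolding implication_classes_def by (elim quotientE)
  have "A\<inverse> = (Gamma E)\<^sup>+ `` {prod.swap p}"
    unfolding A using trancl_Gamma_swap[OF assms(2)] by fastforce
  moreover have "prod.swap p \<in> E"
    using \<open>p \<in> E\<close> assms(2) by (cases p) (auto dest: symD)
  ultimately show ?thesis
    unfolding implication_classes_def by (simp add: quotientI)
qed

lemma color_classes_eq_or_disjoint:
  assumes "irrefl E" "sym E" "A \<in> implication_classes E" "B \<in> implication_classes E"
  shows "color_class A = color_class B \<or> color_class A \<inter> color_class B = {}"
proof -
  have "A = B \<or> A \<inter> B = {}" and "A = B\<inverse> \<or> A \<inter> B\<inverse> = {}"
    using quotient_disj[OF equiv_trancl_Gamma[OF assms(1,2)]] assms(3,4)
      converse_implication_class[OF assms(1,2,4)]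
    unfolding implication_classes_def by blast+
  then show ?thesis
    unfolding color_class_def by auto
qed

lemma span_vertices_color_class: "span_vertices (color_class A) = span_vertices A"
  unfolding span_vertices_def color_class_def by auto

lemma Gamma_step_at_apex:
  assumes "sym E" and "((s, t), (s', t')) \<in> Gamma E" and "(s, v) \<in> E" and "(v, t) \<in> E"
  shows "((s, v), (s', v)) \<in> (Gamma E)\<^sup>= \<and> ((v, t), (v, t')) \<in> (Gamma E)\<^sup>=
    \<or> ((s, v), (s', t')) \<in> Gamma E \<or> ((v, t), (s', t')) \<in> Gamma E"
  using assms by (auto simp: Gamma_def dest: symD)

lemma apex_edges_follow_class:
  assumes "irrefl E" "sym E" "(x, v) \<in> E" "(v, y) \<in> E"
    and x_side: "((x, y), (x, v)) \<notin> (Gamma E)\<^sup>+" and y_side: "((x, y), (v, y)) \<notin> (Gamma E)\<^sup>+"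
    and "((x, y), (s, t)) \<in> (Gamma E)\<^sup>+"
  shows "((x, v), (s, v)) \<in> (Gamma E)\<^sup>+ \<and> ((v, y), (v, t)) \<in> (Gamma E)\<^sup>+"
proof -
  let ?R = "(Gamma E)\<^sup>+"
  have "sym ?R"
    using assms(2) by (intro sym_trancl sym_Gamma)
  have "((x, y), (s, t)) \<in> (Gamma E)\<^sup>*"
    using assms(7) by (rule trancl_into_rtrancl)
  then show ?thesis
  proof (induction s t rule: rtrancl_induct2)
    case refl
    show ?case
      using assms(1,3,4) by (auto intro: Gamma_refl)
  next
    case (step s t s' t')
    have xy_R: "((x, y), (s', t')) \<in> ?R"
      using step.hyps by (rule rtrancl_into_trancl1)
    have "(s, v) \<in> E" and "(v, t) \<in> E"
      using step.IH trancl_Gamma_subset by blast+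
    with assms(2) step.hyps(2) consider
        "((s, v), (s', v)) \<in> (Gamma E)\<^sup>=" "((v, t), (v, t')) \<in> (Gamma E)\<^sup>="
      | "((s, v), (s', t')) \<in> Gamma E" | "((v, t), (s', t')) \<in> Gamma E"
      by (blast dest: Gamma_step_at_apex)
    then show ?case
    proof cases
      case 1
      then show ?thesis
        using step.IH by (auto intro: trancl_into_trancl)
    next
      case 2
      then have "((x, v), (s', t')) \<in> ?R"
        using step.IH by (auto intro: trancl_into_trancl)
      then have "((x, y), (x, v)) \<in> ?R"
        using xy_R \<open>sym ?R\<close> by (meson symD trancl_trans)
      with x_side show ?thesis ..
    next
      case 3
      then have "((v, y), (s', t')) \<in> ?R"
        using step.IH by (auto intro: trancl_into_trancl)
      then have "((x, y), (v, y)) \<in> ?R"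
        using xy_R \<open>sym ?R\<close> by (meson symD trancl_trans)
      with y_side show ?thesis ..
    qed
  qed
qed

lemma implication_class_avoids_apex:
  assumes "irrefl E" "sym E" "C \<in> implication_classes E"
    and "(x, y) \<in> C" "(x, v) \<in> E" "(v, y) \<in> E" "(x, v) \<notin> C" "(v, y) \<notin> C"
  shows "v \<notin> span_vertices C"
proof
  have equiv: "equiv E ((Gamma E)\<^sup>+)"
    using assms(1,2) by (rule equiv_trancl_Gamma)
  obtain p where "C = (Gamma E)\<^sup>+ `` {p}"
    using assms(3) unfolding implication_classes_def by (elim quotientE)
  with assms(4) have C: "C = (Gamma E)\<^sup>+ `` {(x, y)}"
    by (simp add: equiv_class_eq[OF equiv])
  assume "v \<in> span_vertices C"
  then obtain s t where "(s, t) \<in> C" and "s = v \<or> t = v"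
    unfolding span_vertices_def by blast
  then have "(v, v) \<in> E"
    using apex_edges_follow_class[OF assms(1,2,5,6), of s t] assms(7,8) trancl_Gamma_subset
    unfolding C by blast
  with assms(1) show False
    by (simp add: irrefl_def)
qed

lemma implication_class_subset: "A \<in> implication_classes E \<Longrightarrow> A \<subseteq> E"
  unfolding implication_classes_def using trancl_Gamma_subset by (blast elim: quotientE)

lemma span_vertices_differ_at_common_tail:
  assumes "irrefl E" "sym E" "A \<in> implication_classes E" "C \<in> implication_classes E"
    and disjoint: "color_class A \<inter> color_class C = {}"
    and ab: "(a, b) \<in> A" and ac: "(a, c) \<in> C"
  shows "span_vertices A \<noteq> span_vertices C"
proof
  assume span_eq: "span_vertices A = span_vertices C"
  have "(a, b) \<in> E" "(a, c) \<in> E"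
    using ab ac assms(3,4) implication_class_subset by blast+
  have "(b, c) \<in> E"
  proof (rule ccontr)
    assume "(b, c) \<notin> E"
    with \<open>(a, b) \<in> E\<close> \<open>(a, c) \<in> E\<close> have "((a, b), (a, c)) \<in> (Gamma E)\<^sup>+"
      by (auto simp: Gamma_def)
    then have "(a, c) \<in> A"
      using assms(3) ab equiv_trancl_Gamma[OF assms(1,2)] in_quotient_imp_closed
      unfolding implication_classes_def by metis
    with ac disjoint show False
      unfolding color_class_def by blast
  qed
  then have "(c, b) \<in> E"
    by (rule symD[OF assms(2)])
  show False
  proof (cases "(c, b) \<in> A")
    case True
    then have "(a, b) \<notin> C" "(b, c) \<notin> C"
      using ab disjoint unfolding color_class_def by blast+
    then have "b \<notin> span_vertices C"
      using implication_class_avoids_apex[OF assms(1,2,4) ac \<open>(a, b) \<in> E\<close> \<open>(b, c) \<in> E\<close>] by blast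
    moreover have "b \<in> span_vertices A"
      using ab unfolding span_vertices_def by blast
    ultimately show False
      using span_eq by blast
  next
    case False
    moreover have "(a, c) \<notin> A"
      using ac disjoint unfolding color_class_def by blast
    ultimately have "c \<notin> span_vertices A"
      using implication_class_avoids_apex[OF assms(1,2,3) ab \<open>(a, c) \<in> E\<close> \<open>(c, b) \<in> E\<close>] by blast
    moreover have "c \<in> span_vertices C"
      using ac unfolding span_vertices_def by blast
    ultimately show False
      using span_eq by blast
  qed
qed

theorem proposition3p1:
  fixes V :: "'v set" and E :: "('v \<times> 'v) set" and A B :: "('v \<times> 'v) set"
  assumes "undirected_graph V E"
    and "A \<in> implication_classes E"
    and "B \<in> implication_classes E"
  shows "color_class A = color_class B \<longleftrightarrow> span_vertices A = span_vertices B"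
proof
  assume "color_class A = color_class B"
  then show "span_vertices A = span_vertices B"
    by (metis span_vertices_color_class)
next
  assume span_eq: "span_vertices A = span_vertices B"
  have "irrefl E" "sym E"
    using assms(1) unfolding undirected_graph_def by auto
  show "color_class A = color_class B"
  proof (rule ccontr)
    assume "color_class A \<noteq> color_class B"
    then have disjoint: "color_class A \<inter> color_class B = {}"
      using color_classes_eq_or_disjoint[OF \<open>irrefl E\<close> \<open>sym E\<close> assms(2,3)] by blast
    obtain a b where ab: "(a, b) \<in> A"
      using assms(2) in_quotient_imp_non_empty[OF equiv_trancl_Gamma[OF \<open>irrefl E\<close> \<open>sym E\<close>]]
      unfolding implication_classes_def by fast
    then have "a \<in> span_vertices B"
      using span_eq unfolding span_vertices_def by blast
    then obtain c C where "C = B \<or> C = B\<inverse>" and ac: "(a, c) \<in> C"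
      unfolding span_vertices_def by blast
    then have "C \<in> implication_classes E" and "color_class C = color_class B"
      using assms(3) converse_implication_class[OF \<open>irrefl E\<close> \<open>sym E\<close> assms(3)]
      by (auto simp: color_class_def)
    with span_vertices_differ_at_common_tail[OF \<open>irrefl E\<close> \<open>sym E\<close> assms(2) _ _ ab ac]
    show False
      using disjoint span_eq span_vertices_color_class by metis
  qed
qed

end
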